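(* Let $(s_k)_{k\ge0}$ and $(\sigma_k)_{k\ge0}$ be a binomial transform pair and let $m$, $n$, $r$ be non-negative integers. Then $$\sum_{k = 1}^n \sum_{j = 0}^{k - 1} \frac{(- 1)^j}{n - j + 1}\binom{n}{j}\sum_{p = 0}^r (- 1)^p \binom{r}{p} s_{k + p + m - j} = \frac{(- 1)^n}{n + 1} \sum_{p = 0}^m (- 1)^p \binom{m}{p} \left( \sigma_{n + p + r} - \sigma_{p + r} \right).$$ In particular, $$\sum_{k = 1}^n \sum_{j = 0}^{k - 1} \frac{( - 1)^j }{n - j + 1}\binom{n}{j}\sum_{p = 0}^r ( - 1)^p \binom{r}{p}s_{k + p - j} = \frac{( - 1)^n }{n + 1}\left( \sigma _{n + r} - \sigma _r \right),$$ $$\sum_{k = 1}^n \sum_{j = 0}^{k - 1} \frac{( - 1)^j }{n - j + 1}\binom{n}{j}s_{k + m - j} = \frac{( - 1)^n }{n + 1}\sum_{p = 0}^m ( - 1)^p \binom{m}{p}\left( \sigma _{n + p} - \sigma _p \right),$$ and $$\sum_{k = 1}^n \sum_{j = 0}^{k - 1} \frac{(- 1)^j}{n - j + 1}\binom{n}{j} s_{k - j} = \frac{(- 1)^n}{n + 1}(\sigma_n - \sigma_0).$$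
   Context: Two sequences of complex numbers $(s_n)_{n\ge0}$ and $(\sigma_n)_{n\ge0}$ form a binomial transform pair if $\sigma_n = \sum_{k = 0}^n \binom{n}{k} (-1)^k s_k$ for all $n\ge 0$ (equivalently $s_n = \sum_{k = 0}^n \binom{n}{k} (-1)^k \sigma_k$ for all $n\ge0$). Empty sums are zero. *)

theory Defs
  imports Complex_Main
begin

definition binomial_transform_pair :: "(nat \<Rightarrow> complex) \<Rightarrow> (nat \<Rightarrow> complex) \<Rightarrow> bool" where
  "binomial_transform_pair s \<sigma> \<longleftrightarrow>
     (\<forall>n. \<sigma> n = (\<Sum>k=0..n. of_nat (n choose k) * (-1)^k * s k))"

end

theory Submission
  imports Defs
begin

text \<open>
  Write \<open>B\<close> for the binomial transform, \<open>E\<close> for the shift \<open>a \<mapsto> (\<lambda>i. a (i + 1))\<close> and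
  \<open>D = 1 - E\<close>. Pascal's rule gives \<open>B \<circ> E = D \<circ> B\<close> and \<open>B \<circ> D = E \<circ> B\<close>, so the inner sums
  \<open>u = D^r (E^m s)\<close> of the left-hand side have transform \<open>E^r (D^m \<sigma>)\<close>, and it suffices to
  treat \<open>m = r = 0\<close> for an arbitrary sequence \<open>u\<close>. There the coefficient of \<open>u i\<close> in the
  double sum is the partial sum \<open>w 0 + \<dots> + w (n - i)\<close> of the weights
  \<open>w j = (-1)^j (n choose j) / (n - j + 1) = (-1)^j (n + 1 choose j) / (n + 1)\<close>, and partial
  alternating row sums of Pascal's triangle evaluate it to \<open>(-1)^n (-1)^i (n choose i) / (n + 1)\<close>:
  the double sum is \<open>(-1)^n / (n + 1)\<close> times \<open>B u n - u 0\<close>.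
\<close>

definition binomial_transform :: "(nat \<Rightarrow> 'a::comm_ring_1) \<Rightarrow> nat \<Rightarrow> 'a" where
  "binomial_transform a n = (\<Sum>k=0..n. of_nat (n choose k) * (-1)^k * a k)"

definition seq_shift :: "(nat \<Rightarrow> 'a) \<Rightarrow> nat \<Rightarrow> 'a" where
  "seq_shift a = (\<lambda>i. a (Suc i))"

definition seq_diff :: "(nat \<Rightarrow> 'a::ab_group_add) \<Rightarrow> nat \<Rightarrow> 'a" where
  "seq_diff a = (\<lambda>i. a i - a (Suc i))"

lemma binomial_transform_pair_iff:
  "binomial_transform_pair s \<sigma> \<longleftrightarrow> \<sigma> = binomial_transform s"
  by (auto simp: binomial_transform_pair_def binomial_transform_def fun_eq_iff)

lemma binomial_transform_0: "binomial_transform a 0 = a 0"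
  by (simp add: binomial_transform_def)

lemma sum_Suc_choose_eq:
  fixes f :: "nat \<Rightarrow> 'a::comm_semiring_1"
  shows "(\<Sum>k=0..Suc n. of_nat (Suc n choose k) * f k) =
    (\<Sum>k=0..n. of_nat (n choose k) * f k) + (\<Sum>k=0..n. of_nat (n choose k) * f (Suc k))"
proof -
  have "(\<Sum>k=0..Suc n. of_nat (Suc n choose k) * f k) =
      f 0 + (\<Sum>k=0..n. of_nat (n choose Suc k) * f (Suc k)) +
      (\<Sum>k=0..n. of_nat (n choose k) * f (Suc k))"
    by (simp add: atLeast0AtMost sum.atMost_Suc_shift sum.distrib algebra_simps
        del: sum.atMost_Suc)
  also have "f 0 + (\<Sum>k=0..n. of_nat (n choose Suc k) * f (Suc k)) =
      (\<Sum>k=0..Suc n. of_nat (n choose k) * f k)"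
    by (simp add: atLeast0AtMost sum.atMost_Suc_shift del: sum.atMost_Suc)
  also have "\<dots> = (\<Sum>k=0..n. of_nat (n choose k) * f k)"
    by (simp add: binomial_eq_0)
  finally show ?thesis .
qed

lemma binomial_transform_Suc:
  "binomial_transform a (Suc n) = binomial_transform a n - binomial_transform (seq_shift a) n"
  using sum_Suc_choose_eq[of n "\<lambda>k. (-1)^k * a k"]
  by (simp add: binomial_transform_def seq_shift_def mult.assoc sum_negf)

lemma binomial_transform_seq_shift:
  "binomial_transform (seq_shift a) = seq_diff (binomial_transform a)"
  by (simp add: fun_eq_iff seq_diff_def binomial_transform_Suc)

lemma binomial_transform_diff:
  "binomial_transform (\<lambda>i. a i - b i) n = binomial_transform a n - binomial_transform b n"
  by (simp add: binomial_transform_def algebra_simps sum_subtractf)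

lemma binomial_transform_seq_diff:
  "binomial_transform (seq_diff a) = seq_shift (binomial_transform a)"
  using binomial_transform_diff[of a "seq_shift a"]
  by (simp add: fun_eq_iff seq_diff_def seq_shift_def binomial_transform_Suc)

lemma funpow_seq_shift: "(seq_shift ^^ m) a i = a (i + m)"
  by (induction m arbitrary: i) (simp_all add: seq_shift_def)

lemma funpow_seq_diff:
  fixes a :: "nat \<Rightarrow> 'a::comm_ring_1"
  shows "(seq_diff ^^ r) a i = (\<Sum>p=0..r. (-1)^p * of_nat (r choose p) * a (i + p))"
proof (induction r arbitrary: a)
  case 0
  then show ?case by simp
next
  case (Suc r)
  have "(seq_diff ^^ Suc r) a i = (seq_diff ^^ r) (seq_diff a) i"
    by (simp only: funpow_Suc_right comp_def)
  also have "\<dots> = (\<Sum>p=0..r. (-1)^p * of_nat (r choose p) * (a (i + p) - a (i + Suc p)))"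
    by (simp add: Suc.IH seq_diff_def)
  also have "\<dots> = (\<Sum>p=0..r. of_nat (r choose p) * ((-1)^p * a (i + p))) +
      (\<Sum>p=0..r. of_nat (r choose p) * ((-1)^Suc p * a (i + Suc p)))"
    unfolding sum.distrib[symmetric] by (intro sum.cong refl) (simp add: algebra_simps)
  also have "\<dots> = (\<Sum>p=0..Suc r. of_nat (Suc r choose p) * ((-1)^p * a (i + p)))"
    using sum_Suc_choose_eq[of r "\<lambda>p. (-1)^p * a (i + p)"] by simp
  finally show ?case
    by (simp add: algebra_simps)
qed

lemma binomial_transform_funpow_seq_shift:
  "binomial_transform ((seq_shift ^^ m) a) = (seq_diff ^^ m) (binomial_transform a)"
  by (induction m) (simp_all add: binomial_transform_seq_shift)

lemma binomial_transform_funpow_seq_diff: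
  "binomial_transform ((seq_diff ^^ r) a) = (seq_shift ^^ r) (binomial_transform a)"
  by (induction r) (simp_all add: binomial_transform_seq_diff)

lemma sum_alternating_Suc_choose:
  "(\<Sum>j=0..q. (-1)^j * of_nat (Suc n choose j) :: 'a::comm_ring_1) = (-1)^q * of_nat (n choose q)"
  by (induction q) (simp_all add: algebra_simps)

lemma choose_div_eq_Suc_choose_div:
  assumes "j \<le> n"
  shows "of_nat (n choose j) / of_nat (n - j + 1) =
    (of_nat (Suc n choose j) / of_nat (Suc n) :: 'a::field_char_0)"
proof -
  have "(n - j + 1) * (Suc n choose j) = Suc n * (n choose j)"
    using binomial_absorb_comp[of "Suc n" j] assms by (simp add: Suc_diff_le)
  then have "of_nat (n - j + 1) * of_nat (Suc n choose j) = (of_nat (Suc n) * of_nat (n choose j) :: 'a)"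
    by (metis of_nat_mult)
  then show ?thesis
    by (simp add: field_simps del: of_nat_Suc)
qed

lemma sum_alternating_choose_div:
  assumes "i \<le> n"
  shows "(\<Sum>j=0..n-i. (-1)^j / of_nat (n - j + 1) * of_nat (n choose j)) =
    ((-1)^n / of_nat (n + 1) * ((-1)^i * of_nat (n choose i)) :: 'a::field_char_0)"
proof -
  have "(\<Sum>j=0..n-i. (-1)^j / of_nat (n - j + 1) * of_nat (n choose j)) =
      (\<Sum>j=0..n-i. (-1)^j * of_nat (Suc n choose j)) / (of_nat (Suc n) :: 'a)"
  proof (subst sum_divide_distrib, intro sum.cong refl)
    fix j assume "j \<in> {0..n-i}"
    then have "of_nat (n choose j) / of_nat (n - j + 1) = (of_nat (Suc n choose j) / of_nat (Suc n) :: 'a)"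
      using assms by (intro choose_div_eq_Suc_choose_div) auto
    then show "(-1)^j / of_nat (n - j + 1) * of_nat (n choose j) =
        (-1)^j * of_nat (Suc n choose j) / (of_nat (Suc n) :: 'a)"
      by (metis times_divide_eq_left times_divide_eq_right)
  qed
  also have "\<dots> = (-1)^(n-i) * of_nat (n choose i) / of_nat (Suc n)"
    using assms by (simp add: sum_alternating_Suc_choose binomial_symmetric[symmetric])
  also have "(-1::'a)^(n-i) = (-1)^n * (-1)^i"
    using assms by (simp add: power_diff_conv_inverse)
  finally show ?thesis
    by simp
qed

lemma sum_triangle_convolution:
  fixes a c :: "nat \<Rightarrow> 'a::comm_semiring_0"
  shows "(\<Sum>k=1..n. \<Sum>j=0..k-1. c j * a (k - j)) = (\<Sum>i=1..n. a i * (\<Sum>j=0..n-i. c j))"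
proof -
  have "(\<Sum>k=1..n. \<Sum>j=0..k-1. c j * a (k - j)) =
      (\<Sum>(k, j)\<in>(SIGMA k:{1..n}. {0..k-1}). c j * a (k - j))"
    by (simp add: sum.Sigma)
  also have "\<dots> = (\<Sum>(i, j)\<in>(SIGMA i:{1..n}. {0..n-i}). a i * c j)"
    by (rule sum.reindex_bij_witness[where i="\<lambda>(i, j). (i + j, j)" and j="\<lambda>(k, j). (k - j, j)"])
      (auto simp: mult.commute)
  also have "\<dots> = (\<Sum>i=1..n. a i * (\<Sum>j=0..n-i. c j))"
    by (simp add: sum.Sigma sum_distrib_left)
  finally show ?thesis .
qed

lemma triangle_sum_eq_binomial_transform:
  fixes a :: "nat \<Rightarrow> 'a::field_char_0"
  shows "(\<Sum>k=1..n. \<Sum>j=0..k-1. (-1)^j / of_nat (n - j + 1) * of_nat (n choose j) * a (k - j)) =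
    (-1)^n / of_nat (n + 1) * (binomial_transform a n - a 0)"
proof -
  have "(\<Sum>k=1..n. \<Sum>j=0..k-1. (-1)^j / of_nat (n - j + 1) * of_nat (n choose j) * a (k - j)) =
      (\<Sum>i=1..n. a i * (\<Sum>j=0..n-i. (-1)^j / of_nat (n - j + 1) * of_nat (n choose j)))"
    by (rule sum_triangle_convolution)
  also have "\<dots> = (\<Sum>i=1..n. a i * ((-1)^n / of_nat (n + 1) * ((-1)^i * of_nat (n choose i))))"
    by (intro sum.cong refl, subst sum_alternating_choose_div) auto
  also have "\<dots> = (-1)^n / of_nat (n + 1) * (\<Sum>i=1..n. of_nat (n choose i) * (-1)^i * a i)"
    by (simp add: sum_distrib_left algebra_simps)
  also have "(\<Sum>i=1..n. of_nat (n choose i) * (-1)^i * a i) = binomial_transform a n - a 0"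
    by (simp add: binomial_transform_def sum.atLeast_Suc_atMost)
  finally show ?thesis .
qed

lemma binomial_transform_pair_triangle_sum:
  fixes s \<sigma> :: "nat \<Rightarrow> complex"
  assumes "binomial_transform_pair s \<sigma>"
  shows "(\<Sum>k=1..n. \<Sum>j=0..k-1. (-1)^j / of_nat (n - j + 1) * of_nat (n choose j) *
            (\<Sum>p=0..r. (-1)^p * of_nat (r choose p) * s (k + p + m - j)))
          = (-1)^n / of_nat (n + 1) *
            (\<Sum>p=0..m. (-1)^p * of_nat (m choose p) * (\<sigma> (n + p + r) - \<sigma> (p + r)))"
proof -
  define u where "u = (seq_diff ^^ r) ((seq_shift ^^ m) s)"
  have u: "u i = (\<Sum>p=0..r. (-1)^p * of_nat (r choose p) * s (i + p + m))" for i
    by (simp add: u_def funpow_seq_diff funpow_seq_shift add.assoc)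
  have transform_u: "binomial_transform u i =
      (\<Sum>p=0..m. (-1)^p * of_nat (m choose p) * \<sigma> (i + r + p))" for i
    using assms
    by (simp add: u_def binomial_transform_pair_iff binomial_transform_funpow_seq_diff
        binomial_transform_funpow_seq_shift funpow_seq_diff funpow_seq_shift)
  have "(\<Sum>k=1..n. \<Sum>j=0..k-1. (-1)^j / of_nat (n - j + 1) * of_nat (n choose j) *
            (\<Sum>p=0..r. (-1)^p * of_nat (r choose p) * s (k + p + m - j)))
      = (\<Sum>k=1..n. \<Sum>j=0..k-1. (-1)^j / of_nat (n - j + 1) * of_nat (n choose j) * u (k - j))"
    by (intro sum.cong refl) (simp add: u)
  also have "\<dots> = (-1)^n / of_nat (n + 1) * (binomial_transform u n - binomial_transform u 0)"
    unfolding binomial_transform_0 by (rule triangle_sum_eq_binomial_transform)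
  also have "binomial_transform u n - binomial_transform u 0 =
      (\<Sum>p=0..m. (-1)^p * of_nat (m choose p) * (\<sigma> (n + p + r) - \<sigma> (p + r)))"
    by (simp add: transform_u sum_subtractf[symmetric] algebra_simps)
  finally show ?thesis .
qed

theorem theorem10:
  fixes s \<sigma> :: "nat \<Rightarrow> complex" and m n r :: nat
  assumes "binomial_transform_pair s \<sigma>"
  shows "((\<Sum>k=1..n. \<Sum>j=0..k-1. (-1)^j / of_nat (n - j + 1) * of_nat (n choose j) *
            (\<Sum>p=0..r. (-1)^p * of_nat (r choose p) * s (k + p + m - j)))
          = (-1)^n / of_nat (n + 1) *
            (\<Sum>p=0..m. (-1)^p * of_nat (m choose p) * (\<sigma> (n + p + r) - \<sigma> (p + r))))
    \<and> ((\<Sum>k=1..n. \<Sum>j=0..k-1. (-1)^j / of_nat (n - j + 1) * of_nat (n choose j) *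
            (\<Sum>p=0..r. (-1)^p * of_nat (r choose p) * s (k + p - j)))
          = (-1)^n / of_nat (n + 1) * (\<sigma> (n + r) - \<sigma> r))
    \<and> ((\<Sum>k=1..n. \<Sum>j=0..k-1. (-1)^j / of_nat (n - j + 1) * of_nat (n choose j) * s (k + m - j))
          = (-1)^n / of_nat (n + 1) *
            (\<Sum>p=0..m. (-1)^p * of_nat (m choose p) * (\<sigma> (n + p) - \<sigma> p)))
    \<and> ((\<Sum>k=1..n. \<Sum>j=0..k-1. (-1)^j / of_nat (n - j + 1) * of_nat (n choose j) * s (k - j))
          = (-1)^n / of_nat (n + 1) * (\<sigma> n - \<sigma> 0))"
  using binomial_transform_pair_triangle_sum[OF assms, of n r m]
    binomial_transform_pair_triangle_sum[OF assms, of n r 0]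
    binomial_transform_pair_triangle_sum[OF assms, of n 0 m]
    binomial_transform_pair_triangle_sum[OF assms, of n 0 0]
  by simp

end
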